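(* Let $\mathbb{T}^*_{\mathsf{ctl}} = \mathsf{src}!b_1(\mathtt{unit}).\mathsf{src}!b_2(\mathtt{unit}).\mu\mathbf{t}.\,\mathsf{src}?b_1(\mathtt{unit}).\mathsf{sk}?b_1(\mathtt{unit}).\mathsf{sk}!b_1(\mathtt{unit}).\mathsf{src}!b_1(\mathtt{unit}).\mathsf{src}?b_2(\mathtt{unit}).\mathsf{sk}?b_2(\mathtt{unit}).\mathsf{sk}!b_2(\mathtt{unit}).\mathsf{src}!b_2(\mathtt{unit}).\mathbf{t}$ and $\mathbb{T}_{\mathsf{ctl}} = \mu\mathbf{t}.\,\mathsf{src}!b_1(\mathtt{unit}).\mathsf{src}?b_1(\mathtt{unit}).\mathsf{sk}?b_1(\mathtt{unit}).\mathsf{sk}!b_1(\mathtt{unit}).\mathsf{src}!b_2(\mathtt{unit}).\mathsf{src}?b_2(\mathtt{unit}).\mathsf{sk}?b_2(\mathtt{unit}).\mathsf{sk}!b_2(\mathtt{unit}).\mathbf{t}$, where $\mathsf{src}$ and $\mathsf{sk}$ are distinct participants and $b_1,b_2$ are labels. Then $\mathbb{T}^*_{\mathsf{ctl}}\leqslant\mathbb{T}_{\mathsf{ctl}}$.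
   Context: Sorts: $\mathsf{S} ::= \mathtt{nat} \mid \mathtt{int} \mid \mathtt{bool} \mid \mathtt{unit}$; subsorting $\leq:$ is the least reflexive relation with $\mathtt{nat}\leq:\mathtt{int}$. Session types: $\mathbb{T} ::= \&_{i\in I}\mathsf{p}?\ell_i(\mathsf{S}_i).\mathbb{T}_i \mid \oplus_{i\in I}\mathsf{p}!\ell_i(\mathsf{S}_i).\mathbb{T}_i \mid \mathtt{end} \mid \mu\mathbf{t}.\mathbb{T} \mid \mathbf{t}$ (singleton choices written without $\&/\oplus$; $?$ is input from, $!$ is output to the named participant). Session trees: possibly infinite terms $\mathsf{T} ::= \mathtt{end} \mid \&_{i\in I}\mathsf{p}?\ell_i(\mathsf{S}_i).\mathsf{T}_i \mid \oplus_{i\in I}\mathsf{p}!\ell_i(\mathsf{S}_i).\mathsf{T}_i$ (coinductively); $\mathcal{T}(\mathbb{T})$ is the tree obtained from a closed type by unfolding recursion. SISO trees: $\mathsf{W} ::= \mathtt{end} \mid \mathsf{p}?\ell(\mathsf{S}).\mathsf{W} \mid \mathsf{p}!\ell(\mathsf{S}).\mathsf{W}$; $\mathrm{act}(\mathsf{W})$ is the set of symbols $\mathsf{p}?$/$\mathsf{p}!$ of inputs/outputs occurring in $\mathsf{W}$. $\mathcal{A}^{(\mathsf{p})}$: nonempty finite sequences of inputs $\mathsf{q}?\ell(\mathsf{S})$, $\mathsf{q}\neq\mathsf{p}$; $\mathcal{B}^{(\mathsf{p})}$: nonempty finite sequences of inputs $\mathsf{r}?\ell(\mathsf{S})$ (any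 $\mathsf{r}$) and outputs $\mathsf{q}!\ell(\mathsf{S})$, $\mathsf{q}\neq\mathsf{p}$ (used as prefixes). SISO refinement $\lesssim$: largest relation closed backward under $\mathsf{p}?\ell(\mathsf{S}).\mathsf{W}\lesssim\mathsf{p}?\ell(\mathsf{S}').\mathsf{W}'$ if $\mathsf{S}'\leq:\mathsf{S}$, $\mathsf{W}\lesssim\mathsf{W}'$; $\mathsf{p}?\ell(\mathsf{S}).\mathsf{W}\lesssim\mathcal{A}^{(\mathsf{p})}.\mathsf{p}?\ell(\mathsf{S}').\mathsf{W}'$ if $\mathsf{S}'\leq:\mathsf{S}$, $\mathsf{W}\lesssim\mathcal{A}^{(\mathsf{p})}.\mathsf{W}'$, $\mathrm{act}(\mathsf{W})=\mathrm{act}(\mathcal{A}^{(\mathsf{p})}.\mathsf{W}')$; $\mathsf{p}!\ell(\mathsf{S}).\mathsf{W}\lesssim\mathsf{p}!\ell(\mathsf{S}').\mathsf{W}'$ if $\mathsf{S}\leq:\mathsf{S}'$, $\mathsf{W}\lesssim\mathsf{W}'$; $\mathsf{p}!\ell(\mathsf{S}).\mathsf{W}\lesssim\mathcal{B}^{(\mathsf{p})}.\mathsf{p}!\ell(\mathsf{S}').\mathsf{W}'$ if $\mathsf{S}\leq:\mathsf{S}'$, $\mathsf{W}\lesssim\mathcal{B}^{(\mathsf{p})}.\mathsf{W}'$, $\mathrm{act}(\mathsf{W})=\mathrm{act}(\mathcal{B}^{(\mathsf{p})}.\mathsf{W}')$; $\mathtt{end}\lesssim\mathtt{end}$. SO trees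 $\mathsf{U} ::= \mathtt{end}\mid\&_{i\in I}\mathsf{p}?\ell_i(\mathsf{S}_i).\mathsf{U}_i\mid\mathsf{p}!\ell(\mathsf{S}).\mathsf{U}$, SI trees $\mathsf{V} ::= \mathtt{end}\mid\mathsf{p}?\ell(\mathsf{S}).\mathsf{V}\mid\oplus_{i\in I}\mathsf{p}!\ell_i(\mathsf{S}_i).\mathsf{V}_i$; $[\![\mathsf{T}]\!]_{SO}$ is the set of SO trees obtained from $\mathsf{T}$ by keeping exactly one branch (with its payload) at every selection node and all branches at branching nodes, and $[\![\mathsf{T}]\!]_{SI}$ the set of SI trees obtained by keeping exactly one branch at every branching node and all branches at selection nodes. Subtyping: $\mathsf{T}\leqslant\mathsf{T}'$ iff $\forall\mathsf{U}\in[\![\mathsf{T}]\!]_{SO}\ \forall\mathsf{V}'\in[\![\mathsf{T}']\!]_{SI}\ \exists\mathsf{W}\in[\![\mathsf{U}]\!]_{SI}\ \exists\mathsf{W}'\in[\![\mathsf{V}']\!]_{SO}$: $\mathsf{W}\lesssim\mathsf{W}'$; $\mathbb{T}\leqslant\mathbb{T}'$ iff $\mathcal{T}(\mathbb{T})\leqslant\mathcal{T}(\mathbb{T}')$. *)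

theory Defs
  imports Main
begin

datatype sort = SNat | SInt | SBool | SUnit

definition subsort :: "sort \<Rightarrow> sort \<Rightarrow> bool" where
  "subsort S S' \<longleftrightarrow> S = S' \<or> (S = SNat \<and> S' = SInt)"

type_synonym part = string
type_synonym label = string

datatype ty =
    TEnd
  | is_TBra: TBra (tpart: part) (tbrs: "(label \<times> sort \<times> ty) list")   \<comment> \<open>external choice: p?l_i(S_i).T_i\<close>
  | is_TSel: TSel (tpart: part) (tbrs: "(label \<times> sort \<times> ty) list")   \<comment> \<open>internal choice: p!l_i(S_i).T_i\<close>
  | TMu string ty
  | TVar string

text \<open>Substitution (only used with closed substituends, so no capture).\<close>
primrec subst :: "string \<Rightarrow> ty \<Rightarrow> ty \<Rightarrow> ty" where
  "subst x S TEnd = TEnd"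
| "subst x S (TBra p bs) = TBra p (map (map_prod id (map_prod id (subst x S))) bs)"
| "subst x S (TSel p bs) = TSel p (map (map_prod id (map_prod id (subst x S))) bs)"
| "subst x S (TMu y T) = (if x = y then TMu y T else TMu y (subst x S T))"
| "subst x S (TVar y) = (if x = y then S else TVar y)"

primrec mu_depth :: "ty \<Rightarrow> nat" where
  "mu_depth (TMu x T) = Suc (mu_depth T)"
| "mu_depth TEnd = 0"
| "mu_depth (TBra p bs) = 0"
| "mu_depth (TSel p bs) = 0"
| "mu_depth (TVar x) = 0"

fun unfold1 :: "ty \<Rightarrow> ty" where
  "unfold1 (TMu x T) = subst x (TMu x T) T"
| "unfold1 T = T"

text \<open>Unfold all leading recursions (for closed contractive types this yields
  a type whose head is end, a branching or a selection).\<close>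
definition unf_head :: "ty \<Rightarrow> ty" where
  "unf_head T = (unfold1 ^^ mu_depth T) T"

codatatype stree =
    End
  | Bra part "(label \<times> sort \<times> stree) list"
  | Sel part "(label \<times> sort \<times> stree) list"

primcorec tree_of :: "ty \<Rightarrow> stree" where
  "tree_of T = (let H = unf_head T in
      if is_TBra H then Bra (tpart H) (map (map_prod id (map_prod id tree_of)) (tbrs H))
      else if is_TSel H then Sel (tpart H) (map (map_prod id (map_prod id tree_of)) (tbrs H))
      else End)"

text \<open>[[T]]_SO: keep exactly one branch at each selection, all at each branching.\<close>
coinductive so_of :: "stree \<Rightarrow> stree \<Rightarrow> bool" where
  so_end: "so_of End End"
| so_bra: "length cs = length bs \<Longrightarrow>
    (\<forall>i<length bs. fst (bs ! i) = fst (cs ! i) \<and> fst (snd (bs ! i)) = fst (snd (cs ! i))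
        \<and> so_of (snd (snd (bs ! i))) (snd (snd (cs ! i)))) \<Longrightarrow>
    so_of (Bra p bs) (Bra p cs)"
| so_sel: "(l, S, t) \<in> set bs \<Longrightarrow> so_of t u \<Longrightarrow> so_of (Sel p bs) (Sel p [(l, S, u)])"

text \<open>[[T]]_SI: keep exactly one branch at each branching, all at each selection.\<close>
coinductive si_of :: "stree \<Rightarrow> stree \<Rightarrow> bool" where
  si_end: "si_of End End"
| si_sel: "length cs = length bs \<Longrightarrow>
    (\<forall>i<length bs. fst (bs ! i) = fst (cs ! i) \<and> fst (snd (bs ! i)) = fst (snd (cs ! i))
        \<and> si_of (snd (snd (bs ! i))) (snd (snd (cs ! i)))) \<Longrightarrow>
    si_of (Sel p bs) (Sel p cs)"
| si_bra: "(l, S, t) \<in> set bs \<Longrightarrow> si_of t u \<Longrightarrow> si_of (Bra p bs) (Bra p [(l, S, u)])"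

datatype dir = DIn | DOut

inductive occurs :: "dir \<Rightarrow> part \<Rightarrow> stree \<Rightarrow> bool" where
  occ_in_here: "occurs DIn p (Bra p bs)"
| occ_out_here: "occurs DOut p (Sel p bs)"
| occ_in_later: "(l, S, t) \<in> set bs \<Longrightarrow> occurs d q t \<Longrightarrow> occurs d q (Bra p bs)"
| occ_out_later: "(l, S, t) \<in> set bs \<Longrightarrow> occurs d q t \<Longrightarrow> occurs d q (Sel p bs)"

definition act :: "stree \<Rightarrow> (dir \<times> part) set" where
  "act W = {(d, p). occurs d p W}"

datatype action = AIn part label sort | AOut part label sort

fun pre :: "action list \<Rightarrow> stree \<Rightarrow> stree" where
  "pre [] W = W"
| "pre (AIn q l S # A) W = Bra q [(l, S, pre A W)]"
| "pre (AOut q l S # A) W = Sel q [(l, S, pre A W)]"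

definition isA :: "part \<Rightarrow> action list \<Rightarrow> bool" where
  "isA p A \<longleftrightarrow> A \<noteq> [] \<and> (\<forall>a \<in> set A. \<exists>q l S. a = AIn q l S \<and> q \<noteq> p)"

definition isB :: "part \<Rightarrow> action list \<Rightarrow> bool" where
  "isB p B \<longleftrightarrow> B \<noteq> [] \<and>
     (\<forall>a \<in> set B. (\<exists>r l S. a = AIn r l S) \<or> (\<exists>q l S. a = AOut q l S \<and> q \<noteq> p))"

coinductive refines :: "stree \<Rightarrow> stree \<Rightarrow> bool" where
  ref_in: "subsort S' S \<Longrightarrow> refines W W' \<Longrightarrow>
     refines (Bra p [(l, S, W)]) (Bra p [(l, S', W')])"
| ref_inA: "isA p A \<Longrightarrow> subsort S' S \<Longrightarrow> refines W (pre A W') \<Longrightarrow>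
     act W = act (pre A W') \<Longrightarrow>
     refines (Bra p [(l, S, W)]) (pre A (Bra p [(l, S', W')]))"
| ref_out: "subsort S S' \<Longrightarrow> refines W W' \<Longrightarrow>
     refines (Sel p [(l, S, W)]) (Sel p [(l, S', W')])"
| ref_outB: "isB p B \<Longrightarrow> subsort S S' \<Longrightarrow> refines W (pre B W') \<Longrightarrow>
     act W = act (pre B W') \<Longrightarrow>
     refines (Sel p [(l, S, W)]) (pre B (Sel p [(l, S', W')]))"
| ref_end: "refines End End"

definition subtree :: "stree \<Rightarrow> stree \<Rightarrow> bool" where
  "subtree T T' \<longleftrightarrow>
     (\<forall>U. so_of T U \<longrightarrow> (\<forall>V'. si_of T' V' \<longrightarrow>
        (\<exists>W W'. si_of U W \<and> so_of V' W' \<and> refines W W')))"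

definition subtype :: "ty \<Rightarrow> ty \<Rightarrow> bool" where
  "subtype T T' \<longleftrightarrow> subtree (tree_of T) (tree_of T')"

abbreviation inp :: "part \<Rightarrow> label \<Rightarrow> sort \<Rightarrow> ty \<Rightarrow> ty" where
  "inp p l S T \<equiv> TBra p [(l, S, T)]"
abbreviation outp :: "part \<Rightarrow> label \<Rightarrow> sort \<Rightarrow> ty \<Rightarrow> ty" where
  "outp p l S T \<equiv> TSel p [(l, S, T)]"

definition T_ctl_star :: "part \<Rightarrow> part \<Rightarrow> label \<Rightarrow> label \<Rightarrow> ty" where
  "T_ctl_star src sk b1 b2 =
     outp src b1 SUnit (outp src b2 SUnit (TMu ''t''
       (inp src b1 SUnit (inp sk b1 SUnit (outp sk b1 SUnit (outp src b1 SUnit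
       (inp src b2 SUnit (inp sk b2 SUnit (outp sk b2 SUnit (outp src b2 SUnit
         (TVar ''t'')))))))))))"

definition T_ctl :: "part \<Rightarrow> part \<Rightarrow> label \<Rightarrow> label \<Rightarrow> ty" where
  "T_ctl src sk b1 b2 =
     TMu ''t''
       (outp src b1 SUnit (inp src b1 SUnit (inp sk b1 SUnit (outp sk b1 SUnit
       (outp src b2 SUnit (inp src b2 SUnit (inp sk b2 SUnit (outp sk b2 SUnit
         (TVar ''t'')))))))))"

end

theory Submission
  imports Defs
begin

text \<open>Both controller types unfold to single-input single-output trees, whose SO and SI
  projections are the trees themselves, so subtyping reduces to SISO refinement of the two
  trees. The starred controller emits src!b1 src!b2 ahead of time; afterwards each of its
  outputs src!b is matched in the other controller by anticipating it past one relay round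
  src?b sk?b sk!b, which is a B-prefix for src because sk \<noteq> src. Coinduction up to common
  prefixes closes the argument with just three states.\<close>

coinductive siso :: "stree \<Rightarrow> bool" where
  siso_End: "siso End"
| siso_Bra: "siso W \<Longrightarrow> siso (Bra p [(l, S, W)])"
| siso_Sel: "siso W \<Longrightarrow> siso (Sel p [(l, S, W)])"

lemma so_of_siso_eq:
  assumes "so_of T U" and "siso T"
  shows "U = T"
  using assms
proof (coinduction arbitrary: T U rule: stree.coinduct)
  case Eq_stree
  from Eq_stree(2,1) show ?case
    by cases (erule so_of.cases; auto simp: length_Suc_conv)+
qed

lemma si_of_siso_eq:
  assumes "si_of T U" and "siso T"
  shows "U = T"
  using assms
proof (coinduction arbitrary: T U rule: stree.coinduct)
  case Eq_stree
  from Eq_stree(2,1) show ?case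
    by cases (erule si_of.cases; auto simp: length_Suc_conv)+
qed

lemma so_of_siso_refl: "siso T \<Longrightarrow> so_of T T"
  by (coinduction arbitrary: T rule: so_of.coinduct) (auto elim: siso.cases)

lemma si_of_siso_refl: "siso T \<Longrightarrow> si_of T T"
  by (coinduction arbitrary: T rule: si_of.coinduct) (auto elim: siso.cases)

lemma subtree_siso_iff:
  assumes "siso T" and "siso T'"
  shows "subtree T T' \<longleftrightarrow> refines T T'"
  using assms so_of_siso_eq si_of_siso_eq so_of_siso_refl si_of_siso_refl
  unfolding subtree_def by metis

lemma pre_periodic_Cons:
  assumes "x = pre L x" and "L \<noteq> []"
  obtains a M' where "pre M x = pre (a # M') x" and "set (a # M') \<subseteq> set M \<union> set L"
proof (cases M)
  case Nil
  with assms show ?thesis by (cases L) (auto intro: that)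
qed (auto intro: that)

lemma siso_pre_periodic:
  assumes "x = pre L x" and "L \<noteq> []"
  shows "siso (pre M x)"
proof (coinduction arbitrary: M rule: siso.coinduct)
  case siso
  obtain a M' where "pre M x = pre (a # M') x"
    using pre_periodic_Cons[OF assms] by metis
  then show ?case by (cases a) auto
qed

fun act_symbol :: "action \<Rightarrow> dir \<times> part" where
  "act_symbol (AIn p l S) = (DIn, p)"
| "act_symbol (AOut p l S) = (DOut, p)"

lemma act_Bra_single: "act (Bra p [(l, S, W)]) = insert (DIn, p) (act W)"
  by (auto simp: act_def elim: occurs.cases intro: occurs.intros)

lemma act_Sel_single: "act (Sel p [(l, S, W)]) = insert (DOut, p) (act W)"
  by (auto simp: act_def elim: occurs.cases intro: occurs.intros)

lemma act_pre: "act (pre M W) = act_symbol ` set M \<union> act W"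
  by (induction M W rule: pre.induct) (auto simp: act_Bra_single act_Sel_single)

lemma occurs_pre_periodic:
  assumes "occurs d q t" and "t = pre M x" and "x = pre L x" and "L \<noteq> []"
  shows "(d, q) \<in> act_symbol ` (set M \<union> set L)"
  using assms(1,2)
  by (induction arbitrary: M)
     (rule pre_periodic_Cons[OF assms(3,4)], rename_tac a M', case_tac a; force)+

lemma act_periodic:
  assumes "x = pre L x" and "L \<noteq> []"
  shows "act x = act_symbol ` set L"
proof
  show "act x \<subseteq> act_symbol ` set L"
    using occurs_pre_periodic[of _ _ x "[]"] assms by (auto simp: act_def)
  show "act_symbol ` set L \<subseteq> act x"
    using act_pre[of L x] assms(1) by auto
qed

lemma subsort_refl [simp]: "subsort S S"
  by (simp add: subsort_def)

inductive refines_step :: "(stree \<Rightarrow> stree \<Rightarrow> bool) \<Rightarrow> stree \<Rightarrow> stree \<Rightarrow> bool"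
  for X :: "stree \<Rightarrow> stree \<Rightarrow> bool" where
  step_in: "subsort S' S \<Longrightarrow> X W W' \<Longrightarrow>
     refines_step X (Bra p [(l, S, W)]) (Bra p [(l, S', W')])"
| step_inA: "isA p A \<Longrightarrow> subsort S' S \<Longrightarrow> X W (pre A W') \<Longrightarrow> act W = act (pre A W') \<Longrightarrow>
     refines_step X (Bra p [(l, S, W)]) (pre A (Bra p [(l, S', W')]))"
| step_out: "subsort S S' \<Longrightarrow> X W W' \<Longrightarrow>
     refines_step X (Sel p [(l, S, W)]) (Sel p [(l, S', W')])"
| step_outB: "isB p B \<Longrightarrow> subsort S S' \<Longrightarrow> X W (pre B W') \<Longrightarrow> act W = act (pre B W') \<Longrightarrow>
     refines_step X (Sel p [(l, S, W)]) (pre B (Sel p [(l, S', W')]))"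
| step_end: "refines_step X End End"

lemma refines_coinduct_step:
  assumes "X W W'" and "\<And>V V'. X V V' \<Longrightarrow> refines_step X V V'"
  shows "refines W W'"
  by (rule refines.coinduct[of X, OF assms(1)], drule assms(2), erule refines_step.cases)
     fastforce+

definition pre_closure :: "(stree \<Rightarrow> stree \<Rightarrow> bool) \<Rightarrow> stree \<Rightarrow> stree \<Rightarrow> bool" where
  "pre_closure R V V' \<longleftrightarrow> (\<exists>M U U'. V = pre M U \<and> V' = pre M U' \<and> R U U')"

lemma pre_closureI: "R U U' \<Longrightarrow> pre_closure R (pre M U) (pre M U')"
  unfolding pre_closure_def by blast

lemma pre_closure_base: "R U U' \<Longrightarrow> pre_closure R U U'"
  using pre_closureI[of R U U' "[]"] by simp

lemma refines_coinduct_upto_pre: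
  assumes "R W W'"
    and step: "\<And>V V'. R V V' \<Longrightarrow> refines_step (pre_closure R) V V'"
  shows "refines W W'"
proof (rule refines_coinduct_step)
  show "pre_closure R W W'"
    using \<open>R W W'\<close> by (rule pre_closure_base)
next
  fix V V'
  assume "pre_closure R V V'"
  then obtain M U U' where V: "V = pre M U" and V': "V' = pre M U'" and "R U U'"
    unfolding pre_closure_def by blast
  show "refines_step (pre_closure R) V V'"
  proof (cases M)
    case Nil
    with V V' step[OF \<open>R U U'\<close>] show ?thesis by simp
  next
    case (Cons a M')
    have "pre_closure R (pre M' U) (pre M' U')"
      using \<open>R U U'\<close> by (rule pre_closureI)
    with Cons V V' show ?thesis
      by (cases a) (auto intro!: refines_step.intros)
  qed
qed

abbreviation relay :: "part \<Rightarrow> part \<Rightarrow> label \<Rightarrow> action list" where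
  "relay src sk b \<equiv> [AIn src b SUnit, AIn sk b SUnit, AOut sk b SUnit]"

lemma relay_isB: "src \<noteq> sk \<Longrightarrow> isB src (relay src sk b)"
  by (auto simp: isB_def)

lemma refines_ctl_trees:
  assumes "src \<noteq> sk"
    and x: "x = pre (relay src sk b1 @ AOut src b1 SUnit # relay src sk b2 @ [AOut src b2 SUnit]) x"
    and y: "y = pre (AOut src b1 SUnit # relay src sk b1 @ AOut src b2 SUnit # relay src sk b2) y"
  shows "refines (pre [AOut src b1 SUnit, AOut src b2 SUnit] x) y"
proof -
  let ?out = "\<lambda>b W. Sel src [(b, SUnit, W)]"
  define R where "R V V' \<longleftrightarrow>
      V = ?out b1 (?out b2 x) \<and> V' = y
    \<or> V = ?out b2 x \<and> V' = pre (relay src sk b1) (?out b2 (pre (relay src sk b2) y))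
    \<or> V = ?out b1 (pre (relay src sk b2) (?out b2 x)) \<and> V' = pre (relay src sk b2) y" for V V'
  have x_unfold: "x = pre (relay src sk b1) (?out b1 (pre (relay src sk b2) (?out b2 x)))"
    using x by simp
  have y_unfold: "y = ?out b1 (pre (relay src sk b1) (?out b2 (pre (relay src sk b2) y)))"
    using y by simp
  have act_x: "act x = {(DIn, src), (DIn, sk), (DOut, sk), (DOut, src)}"
    using act_periodic[OF x] by auto
  have act_y: "act y = {(DIn, src), (DIn, sk), (DOut, sk), (DOut, src)}"
    using act_periodic[OF y] by auto
  have "R (pre [AOut src b1 SUnit, AOut src b2 SUnit] x) y"
    by (simp add: R_def)
  then show ?thesis
  proof (rule refines_coinduct_upto_pre)
    fix V V'
    assume "R V V'"
    then consider
        "V = ?out b1 (?out b2 x)" "V' = y"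
      | "V = ?out b2 x" "V' = pre (relay src sk b1) (?out b2 (pre (relay src sk b2) y))"
      | "V = ?out b1 (pre (relay src sk b2) (?out b2 x))" "V' = pre (relay src sk b2) y"
      unfolding R_def by blast
    then show "refines_step (pre_closure R) V V'"
    proof cases
      case 1
      have "refines_step (pre_closure R) (?out b1 (?out b2 x))
          (?out b1 (pre (relay src sk b1) (?out b2 (pre (relay src sk b2) y))))"
        by (rule step_out[OF subsort_refl pre_closure_base]) (simp add: R_def)
      with 1 y_unfold show ?thesis by simp
    next
      case 2
      have "refines_step (pre_closure R) (?out b2 x)
          (pre (relay src sk b1) (?out b2 (pre (relay src sk b2) y)))"
      proof (rule step_outB[OF relay_isB[OF \<open>src \<noteq> sk\<close>] subsort_refl])
        show "pre_closure R x (pre (relay src sk b1) (pre (relay src sk b2) y))"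
          by (subst x_unfold, rule pre_closureI) (simp add: R_def)
        show "act x = act (pre (relay src sk b1) (pre (relay src sk b2) y))"
          by (simp add: act_x act_y act_Bra_single act_Sel_single insert_commute)
      qed
      with 2 show ?thesis by simp
    next
      case 3
      have "refines_step (pre_closure R) (?out b1 (pre (relay src sk b2) (?out b2 x)))
          (pre (relay src sk b2) (?out b1 (pre (relay src sk b1) (?out b2 (pre (relay src sk b2) y)))))"
      proof (rule step_outB[OF relay_isB[OF \<open>src \<noteq> sk\<close>] subsort_refl])
        show "pre_closure R (pre (relay src sk b2) (?out b2 x))
            (pre (relay src sk b2) (pre (relay src sk b1) (?out b2 (pre (relay src sk b2) y))))"
          by (rule pre_closureI) (simp add: R_def)
        show "act (pre (relay src sk b2) (?out b2 x))
            = act (pre (relay src sk b2) (pre (relay src sk b1) (?out b2 (pre (relay src sk b2) y))))"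
          by (simp add: act_x act_y act_Bra_single act_Sel_single insert_commute)
      qed
      with 3 y_unfold show ?thesis by simp
    qed
  qed
qed

lemma tree_of_TBra: "tree_of (TBra p bs) = Bra p (map (map_prod id (map_prod id tree_of)) bs)"
  by (subst tree_of.code) (simp add: unf_head_def)

lemma tree_of_TSel: "tree_of (TSel p bs) = Sel p (map (map_prod id (map_prod id tree_of)) bs)"
  by (subst tree_of.code) (simp add: unf_head_def)

lemma tree_of_TMu:
  assumes "is_TBra T \<or> is_TSel T"
  shows "tree_of (TMu x T) = tree_of (subst x (TMu x T) T)"
  using assms
  by (cases T) (simp_all add: tree_of.code[of "TMu x _"] tree_of_TBra tree_of_TSel unf_head_def)

lemma tree_of_T_ctl_star:
  obtains x where "tree_of (T_ctl_star src sk b1 b2) = pre [AOut src b1 SUnit, AOut src b2 SUnit] x"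
    and "x = pre (relay src sk b1 @ AOut src b1 SUnit # relay src sk b2 @ [AOut src b2 SUnit]) x"
proof
  let ?loop = "TMu ''t''
       (inp src b1 SUnit (inp sk b1 SUnit (outp sk b1 SUnit (outp src b1 SUnit
       (inp src b2 SUnit (inp sk b2 SUnit (outp sk b2 SUnit (outp src b2 SUnit
         (TVar ''t'')))))))))"
  show "tree_of (T_ctl_star src sk b1 b2) = pre [AOut src b1 SUnit, AOut src b2 SUnit] (tree_of ?loop)"
    by (simp add: T_ctl_star_def tree_of_TSel)
  show "tree_of ?loop
      = pre (relay src sk b1 @ AOut src b1 SUnit # relay src sk b2 @ [AOut src b2 SUnit]) (tree_of ?loop)"
    by (subst tree_of_TMu) (simp_all add: tree_of_TBra tree_of_TSel)
qed

lemma tree_of_T_ctl: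
  "tree_of (T_ctl src sk b1 b2)
     = pre (AOut src b1 SUnit # relay src sk b1 @ AOut src b2 SUnit # relay src sk b2)
         (tree_of (T_ctl src sk b1 b2))"
  unfolding T_ctl_def by (subst tree_of_TMu) (simp_all add: tree_of_TBra tree_of_TSel)

theorem proposition6p1:
  fixes src sk :: part and b1 b2 :: label
  assumes "src \<noteq> sk"
  shows "subtype (T_ctl_star src sk b1 b2) (T_ctl src sk b1 b2)"
proof -
  obtain x
    where star: "tree_of (T_ctl_star src sk b1 b2) = pre [AOut src b1 SUnit, AOut src b2 SUnit] x"
      and x: "x = pre (relay src sk b1 @ AOut src b1 SUnit # relay src sk b2 @ [AOut src b2 SUnit]) x"
    by (rule tree_of_T_ctl_star)
  have "siso (tree_of (T_ctl_star src sk b1 b2))"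
    unfolding star using x by (rule siso_pre_periodic) simp
  moreover have "siso (tree_of (T_ctl src sk b1 b2))"
    using siso_pre_periodic[OF tree_of_T_ctl, where M = "[]"] by simp
  moreover have "refines (tree_of (T_ctl_star src sk b1 b2)) (tree_of (T_ctl src sk b1 b2))"
    unfolding star using assms x tree_of_T_ctl by (rule refines_ctl_trees)
  ultimately show ?thesis
    unfolding subtype_def by (simp add: subtree_siso_iff)
qed

end
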